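(* Suppose $S$ is totally ordered and $V\subset\mathcal H$ is dense in $\mathcal H$. If for every $\phi\in V\setminus\{0\}$ there is a probability measure $\mathbb P_\phi$ on $(\Omega,\Sigma)$ such that $$\mathbb P_\phi(X_{t_i}=a_i,\ i=1,\dots,k)=\|p^{t_k}_{a_k}\cdots p^{t_1}_{a_1}\hat\phi\|^2$$ for every $t_1<\dots<t_k$ in $S$ and every $a_i\in\Gamma(t_i)$, then $\mathcal H_\pi=\mathcal H$, i.e., $p^s_a$ and $p^t_b$ commute for all $s,t\in S$, $a\in\Gamma(s)$, $b\in\Gamma(t)$.
   Context: Let $\mathcal H$ be a complex Hilbert space. A projection is a bounded self-adjoint idempotent operator. For $\phi\neq0$, $\hat\phi=\phi/\|\phi\|$. Sums of countably many operators are understood strongly. Let $S$ be a set; for each $t\in S$ let $\Gamma(t)$ be a countable set and for $a\in\Gamma(t)$ let $p^t_a$ be a projection on $\mathcal H$ with $\sum_{a\in\Gamma(t)}p^t_a=I$. Let $\pi=\{p^t_a\}$. $\pi$ commutes on $\phi$ if $W\phi=V\phi$ whenever $W,V$ are finite products of elements of $\pi$ with the same factors (with multiplicity) in possibly different orders; $\mathcal H_\pi$ is the set of such $\phi$. Let $\Omega=\prod_{t\in S}\Gamma(t)$, $X_t(\omega)=\omega_t$, and $\Sigma$ the σ-algebra generated by the sets $\{X_t=a\}$; $\{X_{t_i}=a_i,\ i=1,\dots,k\}=\{\omega:\omega_{t_i}=a_i,\ i=1,\dots,k\}$. *)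

theory Defs
  imports "HOL-Probability.Probability"
begin

class complex_hilbert = banach +
  fixes scaleC :: "complex \<Rightarrow> 'a \<Rightarrow> 'a"
    and cinner :: "'a \<Rightarrow> 'a \<Rightarrow> complex"
  assumes scaleC_add_right: "scaleC c (x + y) = scaleC c x + scaleC c y"
    and scaleC_add_left: "scaleC (c + d) x = scaleC c x + scaleC d x"
    and scaleC_scaleC: "scaleC c (scaleC d x) = scaleC (c * d) x"
    and scaleC_one: "scaleC 1 x = x"
    and scaleR_scaleC: "scaleR r x = scaleC (complex_of_real r) x"
    and cinner_commute: "cinner x y = cnj (cinner y x)"
    and cinner_add_left: "cinner (x + y) z = cinner x z + cinner y z"
    and cinner_scaleC_left: "cinner (scaleC c x) y = cnj c * cinner x y"
    and cinner_self_nonneg: "Im (cinner x x) = 0 \<and> 0 \<le> Re (cinner x x)"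
    and norm_cinner: "norm x = sqrt (Re (cinner x x))"

definition is_projection :: "('a::complex_hilbert \<Rightarrow> 'a) \<Rightarrow> bool" where
  "is_projection P \<longleftrightarrow>
     (\<forall>x y. P (x + y) = P x + P y) \<and>
     (\<forall>c x. P (scaleC c x) = scaleC c (P x)) \<and>
     (\<exists>K. \<forall>x. norm (P x) \<le> K * norm x) \<and>
     (\<forall>x y. cinner (P x) y = cinner x (P y)) \<and>
     P \<circ> P = P"

definition normalize :: "'a::real_normed_vector \<Rightarrow> 'a" where
  "normalize \<phi> = scaleR (inverse (norm \<phi>)) \<phi>"

text \<open>Apply the product \<open>p^{t_k}_{a_k} \<cdots> p^{t_1}_{a_1}\<close>: the first list element acts first.\<close>
definition apply_seq :: "('s \<Rightarrow> 'b \<Rightarrow> 'a \<Rightarrow> 'a) \<Rightarrow> ('s \<times> 'b) list \<Rightarrow> 'a \<Rightarrow> 'a" where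
  "apply_seq p ws x = fold (\<lambda>(t, a) y. p t a y) ws x"

definition pi_words :: "'s set \<Rightarrow> ('s \<Rightarrow> 'b set) \<Rightarrow> ('s \<times> 'b) list set" where
  "pi_words S \<Gamma> = {ws. \<forall>(t, a) \<in> set ws. t \<in> S \<and> a \<in> \<Gamma> t}"

text \<open>\<open>\<H>_\<pi>\<close>: vectors on which \<open>\<pi>\<close> commutes (products with the same factors, counted
with multiplicity, in any orders agree on \<open>\<phi>\<close>).\<close>
definition H_pi :: "'s set \<Rightarrow> ('s \<Rightarrow> 'b set) \<Rightarrow> ('s \<Rightarrow> 'b \<Rightarrow> 'a \<Rightarrow> 'a) \<Rightarrow> 'a set" where
  "H_pi S \<Gamma> p = {\<phi>. \<forall>ws \<in> pi_words S \<Gamma>. \<forall>vs \<in> pi_words S \<Gamma>.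
       mset (map (\<lambda>(t, a). p t a) ws) = mset (map (\<lambda>(t, a). p t a) vs) \<longrightarrow>
       apply_seq p ws \<phi> = apply_seq p vs \<phi>}"

definition Omega :: "'s set \<Rightarrow> ('s \<Rightarrow> 'b set) \<Rightarrow> ('s \<Rightarrow> 'b) set" where
  "Omega S \<Gamma> = PiE S \<Gamma>"

definition cyl_gens :: "'s set \<Rightarrow> ('s \<Rightarrow> 'b set) \<Rightarrow> ('s \<Rightarrow> 'b) set set" where
  "cyl_gens S \<Gamma> = {{\<omega> \<in> Omega S \<Gamma>. \<omega> t = a} | t a. t \<in> S \<and> a \<in> \<Gamma> t}"

definition Sigma_alg :: "'s set \<Rightarrow> ('s \<Rightarrow> 'b set) \<Rightarrow> ('s \<Rightarrow> 'b) set set" where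
  "Sigma_alg S \<Gamma> = sigma_sets (Omega S \<Gamma>) (cyl_gens S \<Gamma>)"

definition cyl :: "'s set \<Rightarrow> ('s \<Rightarrow> 'b set) \<Rightarrow> ('s \<times> 'b) list \<Rightarrow> ('s \<Rightarrow> 'b) set" where
  "cyl S \<Gamma> ws = {\<omega> \<in> Omega S \<Gamma>. \<forall>(t, a) \<in> set ws. \<omega> t = a}"

end

theory Submission
  imports Defs
begin

text \<open>For \<open>s < t\<close> the event \<open>{X\<^sub>s = c, X\<^sub>t = b}\<close> is contained in \<open>{X\<^sub>t = b}\<close>, so the
hypothesis on the cylinder measures gives \<open>\<parallel>p\<^sup>t\<^sub>b p\<^sup>s\<^sub>c \<phi>\<parallel> \<le> \<parallel>p\<^sup>t\<^sub>b \<phi>\<parallel>\<close> for \<open>\<phi> \<in> V\<close>, and by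
continuity and density for all \<open>\<phi>\<close>. For two projections \<open>A\<close>, \<open>B\<close> the inequality
\<open>\<parallel>A B \<phi>\<parallel> \<le> \<parallel>A \<phi>\<parallel>\<close> for all \<open>\<phi>\<close> forces \<open>B A B = A B\<close>, and taking adjoints \<open>A B = B A\<close>.
Projections at a common time commute because a resolution of the identity consists of
mutually orthogonal projections. Once all generators commute, any two products with the
same factors agree. Countability of the index sets \<open>\<Gamma> t\<close> is not needed.\<close>

lemma cinner_zero_left [simp]: "cinner (0::'a::complex_hilbert) y = 0"
  using cinner_add_left[of "0::'a" 0 y] by simp

lemma cinner_minus_left: "cinner (- x::'a::complex_hilbert) y = - cinner x y"
  using cinner_add_left[of x "- x" y] by (simp add: eq_neg_iff_add_eq_0 add.commute)

lemma cinner_diff_left: "cinner (x - z::'a::complex_hilbert) y = cinner x y - cinner z y"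
  by (simp only: diff_conv_add_uminus cinner_add_left cinner_minus_left)

lemma cinner_add_right: "cinner y (x + z::'a::complex_hilbert) = cinner y x + cinner y z"
  by (metis cinner_add_left cinner_commute complex_cnj_add)

lemma cinner_diff_right: "cinner y (x - z::'a::complex_hilbert) = cinner y x - cinner y z"
  by (metis cinner_diff_left cinner_commute complex_cnj_diff)

lemma Re_cinner_commute: "Re (cinner y (x::'a::complex_hilbert)) = Re (cinner x y)"
  by (subst cinner_commute) simp

lemma power2_norm_eq_Re_cinner: "(norm (x::'a::complex_hilbert))\<^sup>2 = Re (cinner x x)"
  using norm_cinner[of x] cinner_self_nonneg[of x] by simp

lemma cinner_eq_zero_imp_zero:
  assumes "\<And>u. cinner u (v::'a::complex_hilbert) = 0"
  shows "v = 0"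
  using assms[of v] power2_norm_eq_Re_cinner[of v] by simp

lemma Re_cinner_polarization:
  "Re (cinner y (v::'a::complex_hilbert)) = ((norm (y + v))\<^sup>2 - (norm (y - v))\<^sup>2) / 4"
  by (simp add: power2_norm_eq_Re_cinner cinner_add_left cinner_add_right cinner_diff_left
      cinner_diff_right Re_cinner_commute[of v y])

lemma
  assumes "is_projection (P::'a::complex_hilbert \<Rightarrow> 'a)"
  shows projection_add: "P (x + y) = P x + P y"
    and projection_scaleR: "P (r *\<^sub>R x) = r *\<^sub>R P x"
    and projection_idem: "P (P x) = P x"
    and projection_self_adjoint: "cinner (P x) y = cinner x (P y)"
  using assms unfolding is_projection_def by (auto simp: scaleR_scaleC) (metis comp_apply)

lemma projection_bounded_linear:
  assumes P: "is_projection (P::'a::complex_hilbert \<Rightarrow> 'a)"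
  shows "bounded_linear P"
proof -
  obtain K where "\<And>x. norm (P x) \<le> K * norm x"
    using P unfolding is_projection_def by blast
  then show ?thesis
    by (intro bounded_linear_intro[where K=K])
      (auto simp: projection_add[OF P] projection_scaleR[OF P] mult.commute)
qed

lemma
  assumes "is_projection (P::'a::complex_hilbert \<Rightarrow> 'a)"
  shows projection_zero: "P 0 = 0"
    and projection_diff: "P (x - y) = P x - P y"
  using bounded_linear.linear[OF projection_bounded_linear[OF assms]]
  by (simp_all add: linear_0 linear_diff)

lemma projection_Re_cinner:
  assumes "is_projection (P::'a::complex_hilbert \<Rightarrow> 'a)"
  shows "Re (cinner x (P x)) = (norm (P x))\<^sup>2"
  by (simp add: power2_norm_eq_Re_cinner projection_self_adjoint[OF assms, symmetric]
      projection_idem[OF assms])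

lemma projection_norm_le:
  assumes P: "is_projection (P::'a::complex_hilbert \<Rightarrow> 'a)"
  shows "(norm (P x))\<^sup>2 \<le> (norm x)\<^sup>2"
proof -
  have "0 \<le> (norm (x - P x))\<^sup>2" by simp
  also have "\<dots> = (norm x)\<^sup>2 - (norm (P x))\<^sup>2"
    using projection_Re_cinner[OF P, of x]
    by (simp add: power2_norm_eq_Re_cinner cinner_diff_left cinner_diff_right
        Re_cinner_commute[of "P x" x])
  finally show ?thesis by simp
qed

text \<open>With \<open>w = A B \<psi>\<close> and \<open>z = w - B w\<close> we have \<open>B (B \<psi> - z) = B \<psi>\<close>, so the hypothesis
at \<open>B \<psi> - z\<close> gives \<open>\<parallel>w\<parallel>\<^sup>2 \<le> \<parallel>w - A z\<parallel>\<^sup>2 = \<parallel>w\<parallel>\<^sup>2 - 2 Re \<langle>w, z\<rangle> + \<parallel>A z\<parallel>\<^sup>2\<close>; since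
\<open>Re \<langle>w, z\<rangle> = \<parallel>z\<parallel>\<^sup>2 \<ge> \<parallel>A z\<parallel>\<^sup>2\<close>, this forces \<open>z = 0\<close>.\<close>

lemma projection_absorbs_if_norm_le:
  assumes A: "is_projection (A::'a::complex_hilbert \<Rightarrow> 'a)" and B: "is_projection B"
    and le: "\<And>\<phi>. norm (A (B \<phi>)) \<le> norm (A \<phi>)"
  shows "B (A (B \<psi>)) = A (B \<psi>)"
proof -
  define w where "w = A (B \<psi>)"
  define z where "z = w - B w"
  have "B (B \<psi> - z) = B \<psi>"
    by (simp add: z_def projection_diff[OF B] projection_idem[OF B])
  then have "norm w \<le> norm (w - A z)"
    using le[of "B \<psi> - z"] by (simp add: w_def projection_diff[OF A])
  then have "(norm w)\<^sup>2 \<le> (norm (w - A z))\<^sup>2" by simp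
  also have "\<dots> = (norm w)\<^sup>2 - 2 * Re (cinner w z) + (norm (A z))\<^sup>2"
  proof -
    have "Re (cinner w (A z)) = Re (cinner w z)"
      by (simp add: w_def projection_self_adjoint[OF A, symmetric] projection_idem[OF A])
    then show ?thesis
      by (simp add: power2_norm_eq_Re_cinner cinner_diff_left cinner_diff_right
          Re_cinner_commute[of "A z" w])
  qed
  also have "Re (cinner w z) = (norm z)\<^sup>2"
    using projection_Re_cinner[OF B, of w]
    by (simp add: z_def power2_norm_eq_Re_cinner cinner_diff_left cinner_diff_right
        Re_cinner_commute[of "B w" w])
  finally have "(norm z)\<^sup>2 \<le> (norm (A z))\<^sup>2 - (norm z)\<^sup>2" by simp
  with projection_norm_le[OF A, of z] have "(norm z)\<^sup>2 \<le> 0" by linarith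
  then show ?thesis by (simp add: z_def w_def)
qed

lemma projections_commute_if_absorbs:
  assumes A: "is_projection (A::'a::complex_hilbert \<Rightarrow> 'a)" and B: "is_projection B"
    and absorb: "\<And>\<psi>. B (A (B \<psi>)) = A (B \<psi>)"
  shows "A \<circ> B = B \<circ> A"
proof
  fix \<psi>
  have "cinner u (B (A \<psi>)) = cinner u (A (B \<psi>))" for u
  proof -
    have "cinner u (B (A \<psi>)) = cinner (A (B u)) \<psi>"
      by (simp add: projection_self_adjoint[OF A] projection_self_adjoint[OF B])
    also have "\<dots> = cinner (B (A (B u))) \<psi>" by (simp only: absorb)
    also have "\<dots> = cinner u (B (A (B \<psi>)))"
      by (simp add: projection_self_adjoint[OF A] projection_self_adjoint[OF B])
    finally show ?thesis by (simp only: absorb)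
  qed
  then have "B (A \<psi>) - A (B \<psi>) = 0"
    by (intro cinner_eq_zero_imp_zero) (simp add: cinner_diff_right)
  then show "(A \<circ> B) \<psi> = (B \<circ> A) \<psi>" by simp
qed

lemma projections_commute_if_norm_le:
  assumes "is_projection (A::'a::complex_hilbert \<Rightarrow> 'a)" "is_projection B"
    and "\<And>\<phi>. norm (A (B \<phi>)) \<le> norm (A \<phi>)"
  shows "A \<circ> B = B \<circ> A"
  using assms by (intro projections_commute_if_absorbs projection_absorbs_if_norm_le)

lemma resolution_norm_has_sum:
  assumes res: "\<And>x. ((\<lambda>c. P c x) has_sum x) G"
    and proj: "\<And>c. c \<in> G \<Longrightarrow> is_projection (P c :: 'a::complex_hilbert \<Rightarrow> 'a)"
  shows "((\<lambda>c. (norm (P c y))\<^sup>2) has_sum (norm y)\<^sup>2) G"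
proof -
  define f where "f v = Re (cinner y v)" for v
  have "Modules.additive f" by unfold_locales (simp add: f_def cinner_add_right)
  moreover have "f \<midarrow>y\<rightarrow> f y"
    \<comment> \<open>the class provides no Cauchy-Schwarz inequality; polarization writes \<open>f\<close> via norms\<close>
    unfolding f_def Re_cinner_polarization by (intro tendsto_intros) simp
  ultimately have "((f \<circ> (\<lambda>c. P c y)) has_sum f y) G"
    using res by (rule has_sum_comm_additive)
  moreover have "f (P c y) = (norm (P c y))\<^sup>2" if "c \<in> G" for c
    using projection_Re_cinner[OF proj[OF that]] by (simp add: f_def)
  ultimately have "((\<lambda>c. (norm (P c y))\<^sup>2) has_sum f y) G"
    by (simp add: comp_def cong: has_sum_cong)
  moreover have "f y = (norm y)\<^sup>2" by (simp add: f_def power2_norm_eq_Re_cinner)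
  ultimately show ?thesis by simp
qed

lemma resolution_orthogonal:
  assumes res: "\<And>x. ((\<lambda>c. P c x) has_sum x) G"
    and proj: "\<And>c. c \<in> G \<Longrightarrow> is_projection (P c :: 'a::complex_hilbert \<Rightarrow> 'a)"
    and "a \<in> G" "b \<in> G" "a \<noteq> b"
  shows "P a (P b x) = 0"
proof -
  define y where "y = P b x"
  have "(\<Sum>c\<in>{a, b}. (norm (P c y))\<^sup>2) \<le> (norm y)\<^sup>2"
    using assms(3-5)
    by (intro has_sum_mono_neutral[OF has_sum_finite resolution_norm_has_sum[OF res proj]]) auto
  moreover have "P b y = y" by (simp add: y_def projection_idem[OF proj[OF \<open>b \<in> G\<close>]])
  ultimately show ?thesis using \<open>a \<noteq> b\<close> by (simp add: y_def)
qed

lemma resolution_commute: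
  assumes "\<And>x. ((\<lambda>c. P c x) has_sum x) G"
    and "\<And>c. c \<in> G \<Longrightarrow> is_projection (P c :: 'a::complex_hilbert \<Rightarrow> 'a)"
    and "a \<in> G" "b \<in> G"
  shows "P a \<circ> P b = P b \<circ> P a"
  using resolution_orthogonal[OF assms(1,2)] assms(3,4) by (cases "a = b") (auto simp: fun_eq_iff)

lemma norm_le_on_dense_imp_norm_le:
  fixes f g :: "'a::topological_space \<Rightarrow> 'b::real_normed_vector"
  assumes "closure V = UNIV" "continuous_on UNIV f" "continuous_on UNIV g"
    and "\<And>x. x \<in> V \<Longrightarrow> norm (f x) \<le> norm (g x)"
  shows "norm (f x) \<le> norm (g x)"
proof -
  have "closed {x. norm (f x) \<le> norm (g x)}"
    using assms(2,3) by (intro closed_Collect_le continuous_on_norm)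
  then have "closure V \<subseteq> {x. norm (f x) \<le> norm (g x)}"
    using assms(4) by (intro closure_minimal) auto
  with assms(1) show ?thesis by auto
qed

lemma projections_commute_if_norm_le_on_dense:
  assumes A: "is_projection (A::'a::complex_hilbert \<Rightarrow> 'a)" and B: "is_projection B"
    and "closure V = UNIV" "\<And>\<phi>. \<phi> \<in> V \<Longrightarrow> norm (A (B \<phi>)) \<le> norm (A \<phi>)"
  shows "A \<circ> B = B \<circ> A"
proof (rule projections_commute_if_norm_le[OF A B])
  have "bounded_linear A" "bounded_linear B"
    using A B by (simp_all add: projection_bounded_linear)
  then have "continuous_on UNIV (\<lambda>\<phi>. A (B \<phi>))" "continuous_on UNIV A"
    by (simp_all add: linear_continuous_on bounded_linear_compose)
  then show "norm (A (B \<phi>)) \<le> norm (A \<phi>)" for \<phi>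
    by (rule norm_le_on_dense_imp_norm_le[OF assms(3) _ _ assms(4)])
qed

lemma norm_le_of_normalize:
  assumes "linear f" "linear g"
    and "norm (f (normalize \<phi>)) \<le> norm (g (normalize \<phi>))"
  shows "norm (f \<phi>) \<le> norm (g \<phi>)"
proof (cases "\<phi> = 0")
  case True
  then show ?thesis using assms(1) by (simp add: linear_0)
next
  case False
  then have "inverse (norm \<phi>) * norm (f \<phi>) \<le> inverse (norm \<phi>) * norm (g \<phi>)"
    using assms by (simp add: normalize_def linear_scale)
  with False show ?thesis by simp
qed

lemma apply_seq_conv_fold: "apply_seq p ws = fold (\<lambda>f. f) (map (\<lambda>(t, a). p t a) ws)"
  unfolding apply_seq_def fold_map comp_def by (simp add: case_prod_unfold)

lemma norm_later_projection_le_of_cyl_measure: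
  assumes "prob_space P" "sets P = Sigma_alg S \<Gamma>"
    and cyl_measure: "\<And>ws. ws \<noteq> [] \<Longrightarrow> sorted_wrt (<) (map fst ws) \<Longrightarrow> ws \<in> pi_words S \<Gamma> \<Longrightarrow>
       measure P (cyl S \<Gamma> ws) = (norm (apply_seq p ws \<psi>))\<^sup>2"
    and "s \<in> S" "t \<in> S" "s < t" "c \<in> \<Gamma> s" "b \<in> \<Gamma> t"
  shows "norm (p t b (p s c \<psi>)) \<le> norm (p t b \<psi>)"
proof -
  interpret prob_space P by fact
  have "cyl S \<Gamma> [(t, b)] \<in> cyl_gens S \<Gamma>"
    using assms(5,8) unfolding cyl_gens_def cyl_def by auto
  then have "cyl S \<Gamma> [(t, b)] \<in> sets P"
    unfolding assms(2) Sigma_alg_def by (rule sigma_sets.Basic)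
  moreover have "cyl S \<Gamma> [(s, c), (t, b)] \<subseteq> cyl S \<Gamma> [(t, b)]" by (auto simp: cyl_def)
  ultimately have "measure P (cyl S \<Gamma> [(s, c), (t, b)]) \<le> measure P (cyl S \<Gamma> [(t, b)])"
    by (intro finite_measure_mono)
  then have "(norm (p t b (p s c \<psi>)))\<^sup>2 \<le> (norm (p t b \<psi>))\<^sup>2"
    using assms(4-8) by (simp add: cyl_measure pi_words_def apply_seq_def)
  then show ?thesis by (rule power2_le_imp_le) simp
qed

lemma apply_seq_eq_if_mset_eq:
  assumes commute: "\<And>s a t b. (s, a) \<in> set ws \<Longrightarrow> (t, b) \<in> set ws \<Longrightarrow>
      p s a \<circ> p t b = p t b \<circ> p s a"
    and "mset (map (\<lambda>(t, a). p t a) ws) = mset (map (\<lambda>(t, a). p t a) vs)"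
  shows "apply_seq p ws = apply_seq p vs"
  unfolding apply_seq_conv_fold
proof (rule fold_multiset_equiv[OF _ assms(2)])
  fix f g
  assume "f \<in> set (map (\<lambda>(t, a). p t a) ws)" "g \<in> set (map (\<lambda>(t, a). p t a) ws)"
  then obtain s a t b where mem: "(s, a) \<in> set ws" "(t, b) \<in> set ws"
    and fg: "f = p s a" "g = p t b"
    by auto
  show "f \<circ> g = g \<circ> f" unfolding fg by (rule commute[OF mem])
qed

lemma H_pi_eq_UNIV_if_commute:
  assumes commute: "\<And>s t a b. s \<in> S \<Longrightarrow> t \<in> S \<Longrightarrow> a \<in> \<Gamma> s \<Longrightarrow> b \<in> \<Gamma> t \<Longrightarrow>
      p s a \<circ> p t b = p t b \<circ> p s a"
  shows "H_pi S \<Gamma> p = UNIV"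
proof -
  have "\<phi> \<in> H_pi S \<Gamma> p" for \<phi>
    unfolding H_pi_def
  proof (intro CollectI ballI impI)
    fix ws vs
    assume ws: "ws \<in> pi_words S \<Gamma>"
      and "mset (map (\<lambda>(t, a). p t a) ws) = mset (map (\<lambda>(t, a). p t a) vs)"
    then have "apply_seq p ws = apply_seq p vs"
      by (intro apply_seq_eq_if_mset_eq commute) (auto simp: pi_words_def)
    then show "apply_seq p ws \<phi> = apply_seq p vs \<phi>" by simp
  qed
  then show ?thesis by blast
qed

lemma projections_commute_of_cyl_measure:
  fixes p :: "'s::linorder \<Rightarrow> 'b \<Rightarrow> 'a::complex_hilbert \<Rightarrow> 'a"
  assumes proj: "\<And>t a. t \<in> S \<Longrightarrow> a \<in> \<Gamma> t \<Longrightarrow> is_projection (p t a)"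
    and dense: "closure V = UNIV"
    and prob: "\<And>\<phi>. \<phi> \<in> V \<Longrightarrow> \<phi> \<noteq> 0 \<Longrightarrow>
       \<exists>P. prob_space P \<and> space P = Omega S \<Gamma> \<and> sets P = Sigma_alg S \<Gamma> \<and>
         (\<forall>ws. ws \<noteq> [] \<and> sorted_wrt (<) (map fst ws) \<and> ws \<in> pi_words S \<Gamma> \<longrightarrow>
            measure P (cyl S \<Gamma> ws) = (norm (apply_seq p ws (normalize \<phi>)))\<^sup>2)"
    and "s \<in> S" "t \<in> S" "s < t" "c \<in> \<Gamma> s" "b \<in> \<Gamma> t"
  shows "p t b \<circ> p s c = p s c \<circ> p t b"
proof (rule projections_commute_if_norm_le_on_dense[OF proj proj dense])
  show "t \<in> S" "b \<in> \<Gamma> t" "s \<in> S" "c \<in> \<Gamma> s" by fact+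
next
  fix \<phi>
  assume "\<phi> \<in> V"
  show "norm (p t b (p s c \<phi>)) \<le> norm (p t b \<phi>)"
  proof (cases "\<phi> = 0")
    case True
    then show ?thesis
      using projection_zero[OF proj[OF assms(4,7)]] projection_zero[OF proj[OF assms(5,8)]] by simp
  next
    case False
    with prob[OF \<open>\<phi> \<in> V\<close>] obtain P where P: "prob_space P" "sets P = Sigma_alg S \<Gamma>"
      and cyl_measure: "\<forall>ws. ws \<noteq> [] \<and> sorted_wrt (<) (map fst ws) \<and> ws \<in> pi_words S \<Gamma> \<longrightarrow>
          measure P (cyl S \<Gamma> ws) = (norm (apply_seq p ws (normalize \<phi>)))\<^sup>2"
      by blast
    have bl: "bounded_linear (p t b)" "bounded_linear (p s c)"
      using assms(4,5,7,8) by (simp_all add: projection_bounded_linear proj)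
    have "norm (p t b (p s c (normalize \<phi>))) \<le> norm (p t b (normalize \<phi>))"
      by (rule norm_later_projection_le_of_cyl_measure[OF P _ assms(4-8)]) (use cyl_measure in blast)
    then show ?thesis
      by (rule norm_le_of_normalize[OF bounded_linear.linear[OF bounded_linear_compose[OF bl]]
            bounded_linear.linear[OF bl(1)]])
  qed
qed

theorem theorem7:
  fixes S :: "'s::linorder set"
    and \<Gamma> :: "'s \<Rightarrow> 'b set"
    and p :: "'s \<Rightarrow> 'b \<Rightarrow> 'a::complex_hilbert \<Rightarrow> 'a"
    and V :: "'a set"
  assumes countable: "\<And>t. t \<in> S \<Longrightarrow> countable (\<Gamma> t)"
    and proj: "\<And>t a. t \<in> S \<Longrightarrow> a \<in> \<Gamma> t \<Longrightarrow> is_projection (p t a)"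
    and resolution: "\<And>t x. t \<in> S \<Longrightarrow> ((\<lambda>a. p t a x) has_sum x) (\<Gamma> t)"
    and dense: "closure V = UNIV"
    and prob: "\<And>\<phi>. \<phi> \<in> V \<Longrightarrow> \<phi> \<noteq> 0 \<Longrightarrow>
       \<exists>P. prob_space P \<and> space P = Omega S \<Gamma> \<and> sets P = Sigma_alg S \<Gamma> \<and>
         (\<forall>ws. ws \<noteq> [] \<and> sorted_wrt (<) (map fst ws) \<and> ws \<in> pi_words S \<Gamma> \<longrightarrow>
            measure P (cyl S \<Gamma> ws) = (norm (apply_seq p ws (normalize \<phi>)))\<^sup>2)"
  shows "H_pi S \<Gamma> p = UNIV \<and>
    (\<forall>s\<in>S. \<forall>t\<in>S. \<forall>a\<in>\<Gamma> s. \<forall>b\<in>\<Gamma> t. p s a \<circ> p t b = p t b \<circ> p s a)"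
proof -
  have commute: "p s a \<circ> p t b = p t b \<circ> p s a"
    if "s \<in> S" "t \<in> S" "a \<in> \<Gamma> s" "b \<in> \<Gamma> t" for s t a b
  proof (cases s t rule: linorder_cases)
    case less
    show ?thesis
      using projections_commute_of_cyl_measure[OF proj dense prob that(1,2) less that(3,4)]
      by (rule sym)
  next
    case greater
    show ?thesis
      by (rule projections_commute_of_cyl_measure[OF proj dense prob that(2,1) greater that(4,3)])
  next
    case equal
    with that have "a \<in> \<Gamma> t" by simp
    show ?thesis unfolding equal
      by (rule resolution_commute[OF resolution[OF that(2)] proj[OF that(2)] \<open>a \<in> \<Gamma> t\<close> that(4)])
  qed
  show ?thesis by (intro conjI ballI H_pi_eq_UNIV_if_commute[OF commute] commute)
qed

end
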